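(* Let $\mathbb{K}$ be a field of characteristic zero, $p,q\in\mathbb{Z}^n_{\ge0}$ and $\beta,\gamma\in\mathbb{K}^n$. For any integer $d\ge1$, $$(\mathrm{ad}\,\Delta^q_\gamma)^d(\Delta^p_\beta)=s_d\,\Delta^{p+dq}_{\omega_d},$$ where $s_1=1$, $s_d=\prod_{i=0}^{d-2}\langle\gamma,p+iq\rangle$ for $d>1$, and $\omega_d=\langle\gamma,p+(d-1)q\rangle\beta-d\langle\beta,q\rangle\gamma$.
   Context: For $p\in\mathbb{Z}^n_{\ge0}$ and $\beta\in\mathbb{K}^n$, $\Delta^p_\beta:=x_1^{p_1}\cdots x_n^{p_n}\sum_{j=1}^n\beta_jx_j\partial_j$ (a derivation of $\mathbb{K}[x_1,\ldots,x_n]$, $\partial_j=\partial/\partial x_j$). $\langle\beta,u\rangle:=\sum_i\beta_iu_i$. $(\mathrm{ad}\,X)(Y)=[X,Y]=X\circ Y-Y\circ X$. *)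

theory Defs
  imports Main "HOL-Library.Poly_Mapping"
begin

text \<open>Polynomials in the variables x_j (j ranging over a finite index type 'n, i.e. n variables)
  with coefficients in 'a: finitely supported maps from exponent vectors ('n =>0 nat) to 'a.\<close>

type_synonym ('n, 'a) mpoly = "('n \<Rightarrow>\<^sub>0 nat) \<Rightarrow>\<^sub>0 'a"

definition const_mp :: "'a::zero \<Rightarrow> ('n, 'a) mpoly" where
  "const_mp c = Poly_Mapping.single 0 c"

definition xmon :: "('n \<Rightarrow>\<^sub>0 nat) \<Rightarrow> ('n, 'a::{zero,one}) mpoly" where
  "xmon u = Poly_Mapping.single u 1"

definition xvar :: "'n \<Rightarrow> ('n, 'a::{zero,one}) mpoly" where
  "xvar j = xmon (Poly_Mapping.single j 1)"

definition pdiff :: "'n \<Rightarrow> ('n, 'a::semiring_1) mpoly \<Rightarrow> ('n, 'a) mpoly" where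
  "pdiff j f = (\<Sum>u\<in>Poly_Mapping.keys f.
      Poly_Mapping.single (u - Poly_Mapping.single j (1::nat))
        (of_nat (Poly_Mapping.lookup u j) * Poly_Mapping.lookup f u))"

definition Delta :: "('n::finite \<Rightarrow>\<^sub>0 nat) \<Rightarrow> ('n \<Rightarrow> 'a::comm_semiring_1)
    \<Rightarrow> ('n, 'a) mpoly \<Rightarrow> ('n, 'a) mpoly" where
  "Delta p \<beta> f = xmon p * (\<Sum>j\<in>UNIV. const_mp (\<beta> j) * (xvar j * pdiff j f))"

definition pair :: "('n::finite \<Rightarrow> 'a::semiring_1) \<Rightarrow> ('n \<Rightarrow>\<^sub>0 nat) \<Rightarrow> 'a" where
  "pair \<beta> u = (\<Sum>i\<in>UNIV. \<beta> i * of_nat (Poly_Mapping.lookup u i))"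

definition nscale :: "nat \<Rightarrow> ('n \<Rightarrow>\<^sub>0 nat) \<Rightarrow> ('n \<Rightarrow>\<^sub>0 nat)" where
  "nscale d q = Poly_Mapping.map (\<lambda>k. d * k) q"

definition ad :: "('b \<Rightarrow> 'b::ab_group_add) \<Rightarrow> ('b \<Rightarrow> 'b) \<Rightarrow> ('b \<Rightarrow> 'b)" where
  "ad X Y = (\<lambda>f. X (Y f) - Y (X f))"

definition s_coef :: "('n::finite \<Rightarrow> 'a::comm_semiring_1) \<Rightarrow> ('n \<Rightarrow>\<^sub>0 nat) \<Rightarrow> ('n \<Rightarrow>\<^sub>0 nat)
    \<Rightarrow> nat \<Rightarrow> 'a" where
  "s_coef \<gamma> p q d = (if d = 1 then 1 else (\<Prod>i\<in>{0..d-2}. pair \<gamma> (p + nscale i q)))"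

definition omega :: "('n::finite \<Rightarrow> 'a::comm_ring_1) \<Rightarrow> ('n \<Rightarrow> 'a) \<Rightarrow> ('n \<Rightarrow>\<^sub>0 nat)
    \<Rightarrow> ('n \<Rightarrow>\<^sub>0 nat) \<Rightarrow> nat \<Rightarrow> ('n \<Rightarrow> 'a)" where
  "omega \<beta> \<gamma> p q d = (\<lambda>j. pair \<gamma> (p + nscale (d-1) q) * \<beta> j - of_nat d * pair \<beta> q * \<gamma> j)"

end

theory Submission
  imports Defs
begin

text \<open>Writing E_beta = sum_j beta_j x_j d/dx_j, we have Delta^p_beta = x^p E_beta, and E_beta
  multiplies x^u by <beta, u>. So the coefficient of x^(p+q+w) in [Delta^q_gamma, Delta^p_beta] f is
  (<gamma, p+w> <beta, w> - <beta, q+w> <gamma, w>) f_w = (<gamma, p> <beta, w> - <beta, q> <gamma, w>) f_w,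
  i.e. the bracket is Delta^(p+q) with vector <gamma,p> beta - <beta,q> gamma. Iterating, the vector
  of the d-th bracket satisfies
  <gamma, p+dq> omega_d - <omega_d, q> gamma = <gamma, p+(d-1)q> omega_(d+1),
  whose scalar factors accumulate into s_d. No division occurs, so this holds over any
  commutative ring.\<close>

lemma lookup_single_mult:
  fixes m k :: "'m::monoid_add" and g :: "'m \<Rightarrow>\<^sub>0 'a::semiring_0"
  shows "Poly_Mapping.lookup (Poly_Mapping.single m c * g) k
    = c * (\<Sum>w. Poly_Mapping.lookup g w when k = m + w)"
  by (simp add: lookup_mult lookup_single when_mult)

lemma lookup_single_mult_add:
  fixes m w :: "'m::cancel_comm_monoid_add" and g :: "'m \<Rightarrow>\<^sub>0 'a::semiring_0"
  shows "Poly_Mapping.lookup (Poly_Mapping.single m c * g) (m + w) = c * Poly_Mapping.lookup g w"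
  by (simp add: lookup_single_mult eq_commute[of w])

lemma lookup_single_mult_outside:
  fixes m k :: "'m::monoid_add" and g :: "'m \<Rightarrow>\<^sub>0 'a::semiring_0"
  assumes "\<And>w. k \<noteq> m + w"
  shows "Poly_Mapping.lookup (Poly_Mapping.single m c * g) k = 0"
  using assms by (simp add: lookup_single_mult)

lemma lookup_const_mp_mult:
  fixes g :: "('n, 'a::semiring_0) mpoly"
  shows "Poly_Mapping.lookup (const_mp c * g) u = c * Poly_Mapping.lookup g u"
  using lookup_single_mult_add[of 0 c g u] by (simp add: const_mp_def)

lemma minus_single_add_cancel:
  fixes u :: "'n \<Rightarrow>\<^sub>0 nat"
  assumes "Poly_Mapping.lookup u j \<noteq> 0"
  shows "u - Poly_Mapping.single j 1 + Poly_Mapping.single j 1 = u"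
  using assms by (intro poly_mapping_eqI) (auto simp: lookup_add lookup_minus lookup_single when_def)

lemma lookup_pdiff:
  fixes f :: "('n, 'a::semiring_1) mpoly" and j :: 'n
  defines "e \<equiv> Poly_Mapping.single j (1::nat)"
  shows "Poly_Mapping.lookup (pdiff j f) v
    = of_nat (Poly_Mapping.lookup v j + 1) * Poly_Mapping.lookup f (v + e)"
proof -
  have shift: "(of_nat (Poly_Mapping.lookup u j) * Poly_Mapping.lookup f u when u - e = v)
      = (of_nat (Poly_Mapping.lookup u j) * Poly_Mapping.lookup f u when u = v + e)" for u
  proof (cases "Poly_Mapping.lookup u j = 0")
    case True
    then have "u \<noteq> v + e" by (auto simp: e_def lookup_add)
    with True show ?thesis by simp
  next
    case False
    then have "u - e = v \<longleftrightarrow> u = v + e"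
      using minus_single_add_cancel[of u j] by (auto simp: e_def)
    then show ?thesis by simp
  qed
  have "Poly_Mapping.lookup (pdiff j f) v = (\<Sum>u\<in>Poly_Mapping.keys f.
      of_nat (Poly_Mapping.lookup u j) * Poly_Mapping.lookup f u when u - e = v)"
    by (simp add: pdiff_def lookup_sum lookup_single e_def)
  also have "\<dots> = (\<Sum>u\<in>Poly_Mapping.keys f.
      of_nat (Poly_Mapping.lookup u j) * Poly_Mapping.lookup f u when u = v + e)"
    by (simp only: shift)
  also have "\<dots> = of_nat (Poly_Mapping.lookup (v + e) j) * Poly_Mapping.lookup f (v + e)"
    by (simp add: when_def sum.delta' in_keys_iff)
  finally show ?thesis by (simp add: e_def lookup_add)
qed

lemma lookup_xvar_mult_pdiff:
  fixes f :: "('n, 'a::semiring_1) mpoly"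
  shows "Poly_Mapping.lookup (xvar j * pdiff j f) u
    = of_nat (Poly_Mapping.lookup u j) * Poly_Mapping.lookup f u"
proof (cases "Poly_Mapping.lookup u j = 0")
  case True
  then have "u \<noteq> Poly_Mapping.single j 1 + w" for w
    by (auto simp: lookup_add)
  with True show ?thesis
    by (simp add: xvar_def xmon_def lookup_single_mult_outside)
next
  case False
  define v where "v = u - Poly_Mapping.single j 1"
  have u: "u = Poly_Mapping.single j 1 + v"
    using minus_single_add_cancel[OF False] by (simp add: v_def add.commute)
  show ?thesis
    unfolding u xvar_def xmon_def lookup_single_mult_add lookup_pdiff
    by (simp add: lookup_add add.commute)
qed

definition euler :: "('n::finite \<Rightarrow> 'a::comm_semiring_1) \<Rightarrow> ('n, 'a) mpoly \<Rightarrow> ('n, 'a) mpoly" where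
  "euler \<beta> f = (\<Sum>j\<in>UNIV. const_mp (\<beta> j) * (xvar j * pdiff j f))"

lemma Delta_eq_xmon_mult_euler: "Delta p \<beta> f = xmon p * euler \<beta> f"
  by (simp add: Delta_def euler_def)

lemma lookup_euler:
  "Poly_Mapping.lookup (euler \<beta> f) u = pair \<beta> u * Poly_Mapping.lookup f u"
  by (simp add: euler_def pair_def lookup_sum lookup_const_mp_mult lookup_xvar_mult_pdiff
      sum_distrib_right mult.assoc)

lemma lookup_Delta_add:
  "Poly_Mapping.lookup (Delta p \<beta> f) (p + w) = pair \<beta> w * Poly_Mapping.lookup f w"
  by (simp add: Delta_eq_xmon_mult_euler xmon_def lookup_single_mult_add lookup_euler)

lemma lookup_Delta_outside:
  assumes "\<And>w. u \<noteq> p + w"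
  shows "Poly_Mapping.lookup (Delta p \<beta> f) u = 0"
  using assms by (simp add: Delta_eq_xmon_mult_euler xmon_def lookup_single_mult_outside)

lemma pair_add: "pair \<beta> (u + v) = pair \<beta> u + pair \<beta> v"
  by (simp add: pair_def lookup_add distrib_left sum.distrib)

lemma pair_scale: "pair (\<lambda>j. c * \<beta> j) u = c * pair \<beta> u"
  by (simp add: pair_def sum_distrib_left mult.assoc)

lemma pair_lincomb:
  fixes \<beta> \<gamma> :: "'n::finite \<Rightarrow> 'a::comm_ring_1"
  shows "pair (\<lambda>j. a * \<beta> j - b * \<gamma> j) u = a * pair \<beta> u - b * pair \<gamma> u"
  by (simp add: pair_def sum_subtractf sum_distrib_left left_diff_distrib mult.assoc)

lemma lookup_nscale: "Poly_Mapping.lookup (nscale d q) i = d * Poly_Mapping.lookup q i"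
  by (simp add: nscale_def map.rep_eq when_def)

lemma nscale_0 [simp]: "nscale 0 q = 0"
  and nscale_Suc: "nscale (Suc d) q = nscale d q + q"
  by (simp_all add: poly_mapping_eq_iff fun_eq_iff lookup_nscale lookup_add)

lemma const_mp_mult: "const_mp (a * b) = const_mp a * const_mp b"
  by (simp add: const_mp_def mult_single)

lemma const_mp_mult_Delta: "const_mp c * Delta p \<beta> f = Delta p (\<lambda>j. c * \<beta> j) f"
  by (simp add: Delta_def const_mp_mult sum_distrib_left ac_simps)

lemma lookup_Delta_Delta_add:
  "Poly_Mapping.lookup (Delta q \<gamma> (Delta p \<beta> f)) (p + q + w)
    = pair \<gamma> (p + w) * (pair \<beta> w * Poly_Mapping.lookup f w)"
proof -
  have "p + q + w = q + (p + w)"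
    by (simp add: ac_simps)
  then show ?thesis
    by (simp only: lookup_Delta_add)
qed

lemma lookup_Delta_Delta_outside:
  assumes "\<And>w. u \<noteq> p + q + w"
  shows "Poly_Mapping.lookup (Delta q \<gamma> (Delta p \<beta> f)) u = 0"
proof (cases "\<exists>v. u = q + v")
  case True
  then obtain v where v: "u = q + v" by blast
  have "v \<noteq> p + w" for w
    using assms[of w] v by (auto simp: ac_simps)
  then show ?thesis
    by (simp add: v lookup_Delta_add lookup_Delta_outside)
next
  case False
  then show ?thesis
    by (auto intro: lookup_Delta_outside)
qed

lemma ad_Delta:
  fixes \<beta> \<gamma> :: "'n::finite \<Rightarrow> 'a::comm_ring_1"
  shows "ad (Delta q \<gamma>) (Delta p \<beta>) = Delta (p + q) (\<lambda>j. pair \<gamma> p * \<beta> j - pair \<beta> q * \<gamma> j)"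
proof (intro ext poly_mapping_eqI)
  fix f u
  show "Poly_Mapping.lookup (ad (Delta q \<gamma>) (Delta p \<beta>) f) u
    = Poly_Mapping.lookup (Delta (p + q) (\<lambda>j. pair \<gamma> p * \<beta> j - pair \<beta> q * \<gamma> j) f) u"
  proof (cases "\<exists>w. u = p + q + w")
    case True
    then obtain w where u: "u = p + q + w" by blast
    have "q + p + w = u"
      by (simp add: u add.commute)
    then have "Poly_Mapping.lookup (ad (Delta q \<gamma>) (Delta p \<beta>) f) u
        = pair \<gamma> (p + w) * (pair \<beta> w * Poly_Mapping.lookup f w)
          - pair \<beta> (q + w) * (pair \<gamma> w * Poly_Mapping.lookup f w)"
      using lookup_Delta_Delta_add[of p \<beta> q \<gamma> f w]
      by (simp only: ad_def lookup_minus u lookup_Delta_Delta_add)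
    then show ?thesis
      unfolding u lookup_Delta_add pair_lincomb pair_add by (simp add: algebra_simps)
  next
    case False
    then show ?thesis
      by (simp add: ad_def lookup_minus add.commute[of q p] lookup_Delta_Delta_outside
          lookup_Delta_outside)
  qed
qed

lemma omega_Suc:
  fixes \<beta> \<gamma> :: "'n::finite \<Rightarrow> 'a::comm_ring_1"
  assumes "d \<ge> 1"
  shows "pair \<gamma> (p + nscale d q) * omega \<beta> \<gamma> p q d j - pair (omega \<beta> \<gamma> p q d) q * \<gamma> j
    = pair \<gamma> (p + nscale (d - 1) q) * omega \<beta> \<gamma> p q (Suc d) j"
proof -
  obtain k where d: "d = Suc k" using assms by (cases d) auto
  define A where "A = pair \<gamma> (p + nscale k q)"
  define b where "b = pair \<beta> q"
  define g where "g = pair \<gamma> q"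
  have pair_next: "pair \<gamma> (p + nscale d q) = A + g"
    by (simp add: d A_def g_def nscale_Suc pair_add add_ac)
  have omega_d: "omega \<beta> \<gamma> p q d = (\<lambda>j. A * \<beta> j - (of_nat d * b) * \<gamma> j)"
    by (simp add: omega_def d A_def b_def)
  have omega_Suc_d: "omega \<beta> \<gamma> p q (Suc d) j = (A + g) * \<beta> j - of_nat (Suc d) * b * \<gamma> j"
    by (simp add: omega_def pair_next b_def)
  have pair_prev: "pair \<gamma> (p + nscale (d - 1) q) = A"
    by (simp add: d A_def)
  have pair_omega: "pair (omega \<beta> \<gamma> p q d) q = A * b - of_nat d * b * g"
    unfolding omega_d pair_lincomb b_def g_def ..
  show ?thesis
    unfolding pair_prev pair_next pair_omega unfolding omega_d omega_Suc_d by (simp add: algebra_simps)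
qed

lemma s_coef_Suc:
  assumes "d \<ge> 1"
  shows "s_coef \<gamma> p q (Suc d) = s_coef \<gamma> p q d * pair \<gamma> (p + nscale (d - 1) q)"
proof (cases "d = 1")
  case False
  with assms obtain m where "d = Suc (Suc m)" by (cases d; cases "d - 1") auto
  then show ?thesis by (simp add: s_coef_def)
qed (simp add: s_coef_def)

lemma funpow_ad_Delta:
  fixes \<beta> \<gamma> :: "'n::finite \<Rightarrow> 'a::comm_ring_1"
  assumes "d \<ge> 1"
  shows "(ad (Delta q \<gamma>) ^^ d) (Delta p \<beta>)
    = Delta (p + nscale d q) (\<lambda>j. s_coef \<gamma> p q d * omega \<beta> \<gamma> p q d j)"
  using assms
proof (induction d rule: nat_induct_at_least)
  case base
  show ?case
    by (simp add: ad_Delta s_coef_def omega_def nscale_Suc)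
next
  case (Suc d)
  have "(ad (Delta q \<gamma>) ^^ Suc d) (Delta p \<beta>)
      = ad (Delta q \<gamma>) (Delta (p + nscale d q) (\<lambda>j. s_coef \<gamma> p q d * omega \<beta> \<gamma> p q d j))"
    by (simp add: Suc.IH)
  also have "\<dots> = Delta (p + nscale (Suc d) q) (\<lambda>j. s_coef \<gamma> p q d *
      (pair \<gamma> (p + nscale d q) * omega \<beta> \<gamma> p q d j - pair (omega \<beta> \<gamma> p q d) q * \<gamma> j))"
    unfolding ad_Delta pair_scale by (simp add: nscale_Suc add.assoc algebra_simps)
  also have "\<dots> = Delta (p + nscale (Suc d) q) (\<lambda>j. s_coef \<gamma> p q (Suc d) * omega \<beta> \<gamma> p q (Suc d) j)"
    unfolding omega_Suc[OF Suc.hyps] s_coef_Suc[OF Suc.hyps] by (simp add: mult.assoc)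
  finally show ?case .
qed

theorem lemma8:
  fixes p q :: "'n::finite \<Rightarrow>\<^sub>0 nat" and \<beta> \<gamma> :: "'n \<Rightarrow> 'a::field_char_0" and d :: nat
  assumes "d \<ge> 1"
  shows "(ad (Delta q \<gamma>) ^^ d) (Delta p \<beta>)
       = (\<lambda>f. const_mp (s_coef \<gamma> p q d) * Delta (p + nscale d q) (omega \<beta> \<gamma> p q d) f)"
  by (simp add: funpow_ad_Delta[OF assms] const_mp_mult_Delta)

end
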